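(* Let $G$ be a graph without isolated vertices such that $d_G(u)+d_G(v)\ge 4$ for every edge $uv$ of $G$. Consider any stage of the total domination game on $G$ (starting with all vertices white) at which every legal move has value at most $4$, and let $R$ be the residual graph at this stage. Then every component $C$ of $R$ satisfies one of the following: (a) $C\cong P_4$, with both leaves blue and both internal vertices white; (b) $C\cong P_3$, with both leaves blue and the central vertex green; (c) $C\cong P_2$, with one vertex blue and the other green; (d) $C\cong P_2$, with one vertex blue and the other white.
   Context: The total domination game on a graph $G$ without isolated vertices: Dominator and Staller alternately choose vertices (Dominator first); a chosen vertex must be adjacent to at least one vertex not adjacent to any previously chosen vertex (such a vertex is a legal move); the game ends when every vertex of $G$ has a neighbor among the chosen vertices. At any stage, let $D$ be the set of vertices chosen so far. Each vertex is colored: white if it has no neighbor in $D$ and is not in $D$; green if it has no neighbor in $D$ but is in $D$; blue if it has a neighbor in $D$ but some neighbor of it has no neighbor in $D$; red if it and all its neighbors have a neighbor in $D$. Weights: white $3$, green $2$, blue $1$, red $0$; the value of a legal move is the decrease in the total weight (sum of all vertex weights) caused by playing it. The residual graph $R$ is obtained from $G$ by deleting all red vertices and all edges joining two blue vertices, with vertices keeping their colors. *)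

theory Defs
  imports Main
begin

definition simple_graph :: "'a set \<Rightarrow> ('a \<Rightarrow> 'a \<Rightarrow> bool) \<Rightarrow> bool" where
  "simple_graph V E \<longleftrightarrow> finite V \<and> (\<forall>u v. E u v \<longrightarrow> u \<in> V \<and> v \<in> V)
     \<and> (\<forall>u v. E u v \<longrightarrow> E v u) \<and> (\<forall>u. \<not> E u u)"

definition no_isolated :: "'a set \<Rightarrow> ('a \<Rightarrow> 'a \<Rightarrow> bool) \<Rightarrow> bool" where
  "no_isolated V E \<longleftrightarrow> (\<forall>v\<in>V. \<exists>u. E v u)"

definition degree :: "('a \<Rightarrow> 'a \<Rightarrow> bool) \<Rightarrow> 'a \<Rightarrow> nat" where
  "degree E v = card {u. E v u}"

definition tdom :: "('a \<Rightarrow> 'a \<Rightarrow> bool) \<Rightarrow> 'a set \<Rightarrow> 'a \<Rightarrow> bool" where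
  "tdom E D u \<longleftrightarrow> (\<exists>w\<in>D. E u w)"

definition white :: "('a \<Rightarrow> 'a \<Rightarrow> bool) \<Rightarrow> 'a set \<Rightarrow> 'a \<Rightarrow> bool" where
  "white E D u \<longleftrightarrow> \<not> tdom E D u \<and> u \<notin> D"

definition green :: "('a \<Rightarrow> 'a \<Rightarrow> bool) \<Rightarrow> 'a set \<Rightarrow> 'a \<Rightarrow> bool" where
  "green E D u \<longleftrightarrow> \<not> tdom E D u \<and> u \<in> D"

definition blue :: "('a \<Rightarrow> 'a \<Rightarrow> bool) \<Rightarrow> 'a set \<Rightarrow> 'a \<Rightarrow> bool" where
  "blue E D u \<longleftrightarrow> tdom E D u \<and> (\<exists>w. E u w \<and> \<not> tdom E D w)"

definition red :: "('a \<Rightarrow> 'a \<Rightarrow> bool) \<Rightarrow> 'a set \<Rightarrow> 'a \<Rightarrow> bool" where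
  "red E D u \<longleftrightarrow> tdom E D u \<and> (\<forall>w. E u w \<longrightarrow> tdom E D w)"

definition weight :: "('a \<Rightarrow> 'a \<Rightarrow> bool) \<Rightarrow> 'a set \<Rightarrow> 'a \<Rightarrow> nat" where
  "weight E D u = (if white E D u then 3 else if green E D u then 2
                   else if blue E D u then 1 else 0)"

definition total_weight :: "'a set \<Rightarrow> ('a \<Rightarrow> 'a \<Rightarrow> bool) \<Rightarrow> 'a set \<Rightarrow> nat" where
  "total_weight V E D = (\<Sum>u\<in>V. weight E D u)"

definition legal_move :: "'a set \<Rightarrow> ('a \<Rightarrow> 'a \<Rightarrow> bool) \<Rightarrow> 'a set \<Rightarrow> 'a \<Rightarrow> bool" where
  "legal_move V E D v \<longleftrightarrow> v \<in> V \<and> (\<exists>u. E v u \<and> \<not> tdom E D u)"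

definition move_value :: "'a set \<Rightarrow> ('a \<Rightarrow> 'a \<Rightarrow> bool) \<Rightarrow> 'a set \<Rightarrow> 'a \<Rightarrow> int" where
  "move_value V E D v = int (total_weight V E D) - int (total_weight V E (insert v D))"

inductive game_stage :: "'a set \<Rightarrow> ('a \<Rightarrow> 'a \<Rightarrow> bool) \<Rightarrow> 'a set \<Rightarrow> bool"
  for V E where
  start: "game_stage V E {}"
| move: "game_stage V E D \<Longrightarrow> legal_move V E D v \<Longrightarrow> game_stage V E (insert v D)"

definition res_vert :: "'a set \<Rightarrow> ('a \<Rightarrow> 'a \<Rightarrow> bool) \<Rightarrow> 'a set \<Rightarrow> 'a \<Rightarrow> bool" where
  "res_vert V E D u \<longleftrightarrow> u \<in> V \<and> \<not> red E D u"

definition res_edge :: "'a set \<Rightarrow> ('a \<Rightarrow> 'a \<Rightarrow> bool) \<Rightarrow> 'a set \<Rightarrow> 'a \<Rightarrow> 'a \<Rightarrow> bool" where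
  "res_edge V E D u v \<longleftrightarrow> E u v \<and> res_vert V E D u \<and> res_vert V E D v
      \<and> \<not> (blue E D u \<and> blue E D v)"

definition res_component :: "'a set \<Rightarrow> ('a \<Rightarrow> 'a \<Rightarrow> bool) \<Rightarrow> 'a set \<Rightarrow> 'a \<Rightarrow> 'a set" where
  "res_component V E D x = {y. (res_edge V E D)\<^sup>*\<^sup>* x y}"

definition res_edges_on :: "'a set \<Rightarrow> ('a \<Rightarrow> 'a \<Rightarrow> bool) \<Rightarrow> 'a set \<Rightarrow> 'a set \<Rightarrow> 'a set set \<Rightarrow> bool" where
  "res_edges_on V E D C F \<longleftrightarrow> (\<forall>u\<in>C. \<forall>w\<in>C. res_edge V E D u w \<longleftrightarrow> {u, w} \<in> F)"

end

theory Submission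
  imports Defs
begin

text \<open>Every component of the residual graph contains an undominated (white or green) vertex u,
  and the bound 4 on move values pins down the neighbourhoods around u. Playing a vertex v lowers
  the weight of each newly dominated vertex by at least 2, of each blue vertex turning red by 1, and
  of v itself by at least 1 if v is white. Counting these gains shows: a blue vertex has exactly one
  undominated neighbour, so it is a leaf of the residual graph; a green vertex has at most two
  neighbours; a white vertex whose neighbours are all dominated has only one neighbour; and a white
  vertex has at most one undominated neighbour w, in which case w has at most one further neighbour.
  In the last case the degree condition forces both vertices of the white pair to have a further,
  necessarily blue, neighbour.\<close>

lemma weight_eq:
  "weight E D u = (if tdom E D u then (if \<forall>w. E u w \<longrightarrow> tdom E D w then 0 else 1)
                   else if u \<in> D then 2 else 3)"
  by (auto simp: weight_def white_def green_def blue_def)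

lemma tdom_insert: "tdom E D u \<Longrightarrow> tdom E (insert v D) u"
  by (auto simp: tdom_def)

lemma weight_insert_le: "weight E (insert v D) u \<le> weight E D u"
  unfolding weight_eq using tdom_insert[of E D _ v] by auto

definition gain :: "('a \<Rightarrow> 'a \<Rightarrow> bool) \<Rightarrow> 'a set \<Rightarrow> 'a \<Rightarrow> 'a \<Rightarrow> int" where
  "gain E D v u = int (weight E D u) - int (weight E (insert v D) u)"

lemma gain_nonneg: "0 \<le> gain E D v u"
  using weight_insert_le[of E v D u] by (simp add: gain_def)

lemma move_value_eq_sum_gain: "move_value V E D v = (\<Sum>u\<in>V. gain E D v u)"
  by (simp add: move_value_def total_weight_def gain_def sum_subtractf)

lemma sum_list_gain_le_move_value:
  assumes "finite V" "distinct us" "set us \<subseteq> V"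
  shows "(\<Sum>u\<leftarrow>us. gain E D v u) \<le> move_value V E D v"
  unfolding move_value_eq_sum_gain sum_list_distinct_conv_sum_set[OF assms(2)]
  using assms(1,3) by (intro sum_mono2) (auto simp: gain_nonneg)

lemma gain_settled:
  assumes "tdom E (insert v D) u" "\<forall>w. E u w \<longrightarrow> tdom E (insert v D) w"
  shows "gain E D v u = int (weight E D u)"
  using assms by (simp add: gain_def weight_eq)

lemma gain_blue_settled:
  assumes "blue E D b" "\<forall>w. E b w \<longrightarrow> tdom E (insert v D) w"
  shows "gain E D v b = 1"
  using assms tdom_insert[of E D b v] by (simp add: gain_def weight_eq blue_def)

lemma degree_le_2:
  assumes "\<And>y z. E w y \<Longrightarrow> E w z \<Longrightarrow> y \<noteq> u \<Longrightarrow> z \<noteq> u \<Longrightarrow> y = z"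
  shows "degree E w \<le> 2"
proof (cases "\<exists>b. E w b \<and> b \<noteq> u")
  case True
  then obtain b where "E w b" "b \<noteq> u" by blast
  with assms have "{y. E w y} \<subseteq> {u, b}" by blast
  hence "degree E w \<le> card {u, b}" unfolding degree_def by (rule card_mono[rotated]) simp
  also have "\<dots> \<le> 2" by (simp add: card_insert_if)
  finally show ?thesis .
next
  case False
  hence "{y. E w y} \<subseteq> {u}" by blast
  hence "degree E w \<le> card {u}" unfolding degree_def by (rule card_mono[rotated]) simp
  thus ?thesis by simp
qed

lemma reachable_eq_closed_set:
  assumes "u \<in> S" "\<And>a y. a \<in> S \<Longrightarrow> r a y \<Longrightarrow> y \<in> S" "\<And>y. y \<in> S \<Longrightarrow> r\<^sup>*\<^sup>* u y"
  shows "{y. r\<^sup>*\<^sup>* u y} = S"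
proof (intro set_eqI iffI)
  fix y assume "y \<in> {y. r\<^sup>*\<^sup>* u y}"
  hence "r\<^sup>*\<^sup>* u y" by simp
  thus "y \<in> S" by induction (use assms(1,2) in blast)+
qed (use assms(3) in blast)

locale sgraph =
  fixes V :: "'a set" and E :: "'a \<Rightarrow> 'a \<Rightarrow> bool"
  assumes simple: "simple_graph V E"
begin

lemma edge_sym: "E u v \<Longrightarrow> E v u"
  and edge_in_V: "E u v \<Longrightarrow> u \<in> V \<and> v \<in> V"
  and edge_irrefl: "\<not> E u u"
  and finite_V: "finite V"
  using simple by (auto simp: simple_graph_def)

lemma gain_undominated_nbr:
  assumes "E v u" "\<not> tdom E D u" shows "2 \<le> gain E D v u"
  using assms edge_sym[OF assms(1)] edge_sym
  by (auto simp: gain_def weight_def white_def green_def blue_def tdom_def)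

lemma gain_white_self: "white E D v \<Longrightarrow> 1 \<le> gain E D v v"
  using edge_irrefl by (auto simp: gain_def weight_def white_def green_def blue_def tdom_def)

lemma gain_blue_self: "blue E D b \<Longrightarrow> gain E D b b = 1"
  by (rule gain_blue_settled) (auto simp: tdom_def dest: edge_sym)

lemma nbr_of_undominated_blue: "\<not> tdom E D u \<Longrightarrow> E u y \<Longrightarrow> tdom E D y \<Longrightarrow> blue E D y"
  using edge_sym[of u y] unfolding blue_def by blast

lemma white_if_undominated_nbr:
  "\<not> tdom E D u \<Longrightarrow> E u y \<Longrightarrow> \<not> tdom E D y \<Longrightarrow> white E D u"
  using edge_sym[of u y] unfolding white_def tdom_def by blast

lemma nbr_of_green_dominated: "green E D g \<Longrightarrow> E g y \<Longrightarrow> tdom E D y"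
  using edge_sym[of g y] unfolding green_def tdom_def by blast

lemma res_edge_sym: "res_edge V E D u v \<Longrightarrow> res_edge V E D v u"
  using edge_sym[of u v] unfolding res_edge_def by blast

lemma res_edge_undominated_iff:
  assumes "\<not> tdom E D u" "u \<in> V" shows "res_edge V E D u y \<longleftrightarrow> E u y"
  using assms edge_in_V edge_sym[of u y]
  by (auto simp: res_edge_def res_vert_def red_def blue_def)

lemma res_edge_blue_iff:
  assumes "blue E D b" shows "res_edge V E D b y \<longleftrightarrow> E b y \<and> \<not> tdom E D y"
  using assms edge_in_V edge_sym[of b y]
  by (auto simp: res_edge_def res_vert_def red_def blue_def)

lemma res_component_shift:
  assumes "res_edge V E D a c" shows "res_component V E D a = res_component V E D c"
  using converse_rtranclp_into_rtranclp[of "res_edge V E D", OF assms]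
    converse_rtranclp_into_rtranclp[of "res_edge V E D", OF res_edge_sym[OF assms]]
  unfolding res_component_def by blast

lemma res_component_has_undominated:
  assumes "res_vert V E D x"
  obtains u where "u \<in> V" "\<not> tdom E D u" "res_component V E D x = res_component V E D u"
proof (cases "tdom E D x")
  case True
  then obtain u where "E x u" "\<not> tdom E D u" using assms by (auto simp: res_vert_def red_def)
  moreover have "res_edge V E D x u"
    using res_edge_undominated_iff[OF \<open>\<not> tdom E D u\<close>] edge_in_V edge_sym res_edge_sym
      \<open>E x u\<close> by blast
  ultimately show ?thesis using that edge_in_V res_component_shift by blast
qed (use assms that in \<open>auto simp: res_vert_def\<close>)

end

definition bwwb_path :: "'a set \<Rightarrow> ('a \<Rightarrow> 'a \<Rightarrow> bool) \<Rightarrow> 'a set \<Rightarrow> 'a set \<Rightarrow> bool" where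
  "bwwb_path V E D C \<longleftrightarrow> (\<exists>a b c d. distinct [a, b, c, d] \<and> C = {a, b, c, d}
     \<and> res_edges_on V E D C {{a, b}, {b, c}, {c, d}}
     \<and> blue E D a \<and> white E D b \<and> white E D c \<and> blue E D d)"

definition bgb_path :: "'a set \<Rightarrow> ('a \<Rightarrow> 'a \<Rightarrow> bool) \<Rightarrow> 'a set \<Rightarrow> 'a set \<Rightarrow> bool" where
  "bgb_path V E D C \<longleftrightarrow> (\<exists>a b c. distinct [a, b, c] \<and> C = {a, b, c}
     \<and> res_edges_on V E D C {{a, b}, {b, c}}
     \<and> blue E D a \<and> green E D b \<and> blue E D c)"

definition bg_edge :: "'a set \<Rightarrow> ('a \<Rightarrow> 'a \<Rightarrow> bool) \<Rightarrow> 'a set \<Rightarrow> 'a set \<Rightarrow> bool" where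
  "bg_edge V E D C \<longleftrightarrow> (\<exists>a b. a \<noteq> b \<and> C = {a, b} \<and> res_edges_on V E D C {{a, b}}
     \<and> blue E D a \<and> green E D b)"

definition bw_edge :: "'a set \<Rightarrow> ('a \<Rightarrow> 'a \<Rightarrow> bool) \<Rightarrow> 'a set \<Rightarrow> 'a set \<Rightarrow> bool" where
  "bw_edge V E D C \<longleftrightarrow> (\<exists>a b. a \<noteq> b \<and> C = {a, b} \<and> res_edges_on V E D C {{a, b}}
     \<and> blue E D a \<and> white E D b)"

locale value_bounded = sgraph +
  fixes D :: "'a set"
  assumes value_le_4: "\<forall>v. legal_move V E D v \<longrightarrow> move_value V E D v \<le> 4"
begin

lemma gains_le_4:
  assumes "E v u" "\<not> tdom E D u" "distinct us" "set us \<subseteq> V"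
  shows "(\<Sum>x\<leftarrow>us. gain E D v x) \<le> 4"
proof -
  have "legal_move V E D v" using assms(1,2) edge_in_V by (auto simp: legal_move_def)
  hence "move_value V E D v \<le> 4" using value_le_4 by blast
  thus ?thesis using sum_list_gain_le_move_value[OF finite_V assms(3,4), of E D v] by linarith
qed

lemma blue_undominated_nbr_unique:
  assumes "blue E D b" "E b u" "\<not> tdom E D u" "E b u'" "\<not> tdom E D u'"
  shows "u' = u"
proof (rule ccontr)
  assume "u' \<noteq> u"
  with assms have "distinct [b, u, u']" by (auto simp: blue_def)
  moreover have "set [b, u, u'] \<subseteq> V" using assms(2,4)[THEN edge_in_V] by simp
  ultimately have "gain E D b b + gain E D b u + gain E D b u' \<le> 4"
    using gains_le_4[OF assms(2,3), of "[b, u, u']"] by simp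
  with gain_blue_self[OF assms(1)] gain_undominated_nbr[OF assms(2,3)]
    gain_undominated_nbr[OF assms(4,5)] show False by linarith
qed

text \<open>Dominating the unique undominated neighbour of a blue vertex turns it red.\<close>

lemma gain_blue_sharing_nbr:
  assumes "blue E D b" "E b u" "\<not> tdom E D u" "E v u"
  shows "gain E D v b = 1"
proof (rule gain_blue_settled[OF assms(1)], intro allI impI)
  fix w assume "E b w"
  show "tdom E (insert v D) w"
  proof (cases "tdom E D w")
    case False
    hence "w = u" using blue_undominated_nbr_unique[OF assms(1-3) \<open>E b w\<close>] by simp
    thus ?thesis using edge_sym[OF assms(4)] by (simp add: tdom_def)
  qed (rule tdom_insert)
qed

lemma res_edge_blue_iff_eq:
  assumes "blue E D b" "E b u" "\<not> tdom E D u"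
  shows "res_edge V E D b z \<longleftrightarrow> z = u"
  using res_edge_blue_iff[OF assms(1)] blue_undominated_nbr_unique[OF assms] assms(2,3) by blast

lemma green_no_three_nbrs:
  assumes "green E D g" "E g b1" "E g b2" "E g b3"
  shows "\<not> distinct [b1, b2, b3]"
proof
  assume "distinct [b1, b2, b3]"
  have nt: "\<not> tdom E D g" using assms(1) by (simp add: green_def)
  have blue: "blue E D y" if "E g y" for y
    using nbr_of_undominated_blue[OF nt that nbr_of_green_dominated[OF assms(1) that]] .
  have gain_g: "gain E D b1 g = 2"
  proof -
    have "tdom E (insert b1 D) g" using assms(2) by (simp add: tdom_def)
    moreover have "\<forall>w. E g w \<longrightarrow> tdom E (insert b1 D) w"
      using nbr_of_green_dominated[OF assms(1)] tdom_insert[of E D _ b1] by blast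
    ultimately have "gain E D b1 g = int (weight E D g)" by (rule gain_settled)
    thus ?thesis using assms(1) by (simp add: weight_def white_def green_def)
  qed
  have "distinct [g, b1, b2, b3]"
    using \<open>distinct [b1, b2, b3]\<close> assms(2-4) edge_irrefl by auto
  moreover have "set [g, b1, b2, b3] \<subseteq> V" using assms(2-4)[THEN edge_in_V] by simp
  ultimately have "gain E D b1 g + gain E D b1 b1 + gain E D b1 b2 + gain E D b1 b3 \<le> 4"
    using gains_le_4[OF edge_sym[OF assms(2)] nt, of "[g, b1, b2, b3]"] by simp
  thus False
    using gain_g gain_blue_self[OF blue[OF assms(2)]]
      gain_blue_sharing_nbr[OF blue[OF assms(3)] edge_sym[OF assms(3)] nt edge_sym[OF assms(2)]]
      gain_blue_sharing_nbr[OF blue[OF assms(4)] edge_sym[OF assms(4)] nt edge_sym[OF assms(2)]]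
    by linarith
qed

lemma white_dominated_nbrs_unique:
  assumes "white E D w" "\<forall>y. E w y \<longrightarrow> tdom E D y" "E w b1" "E w b2"
  shows "b1 = b2"
proof (rule ccontr)
  assume "b1 \<noteq> b2"
  have nt: "\<not> tdom E D w" using assms(1) by (simp add: white_def)
  have blue: "blue E D y" if "E w y" for y
    using nbr_of_undominated_blue[OF nt that] assms(2) that by blast
  have gain_w: "gain E D b1 w = 3"
  proof -
    have "tdom E (insert b1 D) w" using assms(3) by (simp add: tdom_def)
    moreover have "\<forall>y. E w y \<longrightarrow> tdom E (insert b1 D) y"
      using assms(2) tdom_insert[of E D _ b1] by blast
    ultimately have "gain E D b1 w = int (weight E D w)" by (rule gain_settled)
    thus ?thesis using assms(1) by (simp add: weight_def)
  qed
  have "distinct [w, b1, b2]" using \<open>b1 \<noteq> b2\<close> assms(3,4) edge_irrefl by auto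
  moreover have "set [w, b1, b2] \<subseteq> V" using assms(3,4)[THEN edge_in_V] by simp
  ultimately have "gain E D b1 w + gain E D b1 b1 + gain E D b1 b2 \<le> 4"
    using gains_le_4[OF edge_sym[OF assms(3)] nt, of "[w, b1, b2]"] by simp
  thus False
    using gain_w gain_blue_self[OF blue[OF assms(3)]]
      gain_blue_sharing_nbr[OF blue[OF assms(4)] edge_sym[OF assms(4)] nt edge_sym[OF assms(3)]]
    by linarith
qed

lemma white_undominated_nbr_unique:
  assumes "white E D w" "E w w'" "\<not> tdom E D w'" "E w u" "\<not> tdom E D u"
  shows "u = w'"
proof (rule ccontr)
  assume "u \<noteq> w'"
  hence "distinct [w, w', u]" using assms(2,4) edge_irrefl by auto
  moreover have "set [w, w', u] \<subseteq> V" using assms(2,4)[THEN edge_in_V] by simp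
  ultimately have "gain E D w w + gain E D w w' + gain E D w u \<le> 4"
    using gains_le_4[OF assms(2,3), of "[w, w', u]"] by simp
  with gain_white_self[OF assms(1)] gain_undominated_nbr[OF assms(2,3)]
    gain_undominated_nbr[OF assms(4,5)] show False by linarith
qed

lemma white_pair_other_nbr_unique:
  assumes "white E D w" "E w w'" "\<not> tdom E D w'" "E w' b1" "E w' b2" "b1 \<noteq> w" "b2 \<noteq> w"
  shows "b1 = b2"
proof (rule ccontr)
  assume "b1 \<noteq> b2"
  have nt: "\<not> tdom E D w" using assms(1) by (simp add: white_def)
  have "white E D w'" using white_if_undominated_nbr[OF assms(3) edge_sym[OF assms(2)] nt] .
  hence blue: "blue E D y" if "E w' y" "y \<noteq> w" for y
    using white_undominated_nbr_unique[OF _ edge_sym[OF assms(2)] nt that(1)] that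
      nbr_of_undominated_blue[OF assms(3) that(1)] by blast
  have "distinct [w, w', b1, b2]" using \<open>b1 \<noteq> b2\<close> assms(2,4-7) edge_irrefl by auto
  moreover have "set [w, w', b1, b2] \<subseteq> V" using assms(2,4,5)[THEN edge_in_V] by simp
  ultimately have "gain E D w w + gain E D w w' + gain E D w b1 + gain E D w b2 \<le> 4"
    using gains_le_4[OF assms(2,3), of "[w, w', b1, b2]"] by simp
  thus False
    using gain_white_self[OF assms(1)] gain_undominated_nbr[OF assms(2,3)]
      gain_blue_sharing_nbr[OF blue[OF assms(4,6)] edge_sym[OF assms(4)] assms(3,2)]
      gain_blue_sharing_nbr[OF blue[OF assms(5,7)] edge_sym[OF assms(5)] assms(3,2)]
    by linarith
qed

lemma green_nbrs:
  assumes "green E D g" "g \<in> V" "no_isolated V E"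
  obtains b1 b2 where "\<And>y. E g y \<longleftrightarrow> y = b1 \<or> y = b2"
proof -
  obtain b1 where "E g b1" using assms(2,3) by (auto simp: no_isolated_def)
  show ?thesis
  proof (cases "\<exists>b2. E g b2 \<and> b2 \<noteq> b1")
    case True
    then obtain b2 where "E g b2" "b2 \<noteq> b1" by blast
    with green_no_three_nbrs[OF assms(1) \<open>E g b1\<close>] \<open>E g b1\<close>
    have "E g y \<longleftrightarrow> y = b1 \<or> y = b2" for y by auto
    thus ?thesis by (rule that)
  next
    case False
    with \<open>E g b1\<close> show ?thesis by (intro that[of b1 b1]) blast
  qed
qed

lemma white_pair_nbrs:
  assumes "white E D u" "E u w" "\<not> tdom E D w"
    and deg: "\<forall>u v. E u v \<longrightarrow> 4 \<le> degree E u + degree E v"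
  obtains b where "b \<noteq> w" "tdom E D b" "\<And>y. E u y \<longleftrightarrow> y = w \<or> y = b"
proof -
  have nt: "\<not> tdom E D u" using assms(1) by (simp add: white_def)
  have "white E D w" using white_if_undominated_nbr[OF assms(3) edge_sym[OF assms(2)] nt] .
  note other_nbr_unique = white_pair_other_nbr_unique[OF this edge_sym[OF assms(2)] nt]
  have "\<exists>b. E u b \<and> b \<noteq> w"
  proof (rule ccontr)
    assume "\<nexists>b. E u b \<and> b \<noteq> w"
    hence "{y. E u y} \<subseteq> {w}" by blast
    hence "degree E u \<le> card {w}" unfolding degree_def by (rule card_mono[rotated]) simp
    moreover have "degree E w \<le> 2"
      by (rule degree_le_2) (rule white_pair_other_nbr_unique[OF assms(1-3)])
    moreover have "4 \<le> degree E u + degree E w" using deg assms(2) by blast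
    ultimately show False by simp
  qed
  then obtain b where "E u b" "b \<noteq> w" by blast
  moreover have "tdom E D b"
    using white_undominated_nbr_unique[OF assms(1-3) \<open>E u b\<close>] \<open>b \<noteq> w\<close> by blast
  moreover have "E u y \<longleftrightarrow> y = w \<or> y = b" for y
    using other_nbr_unique[of b y] \<open>E u b\<close> \<open>b \<noteq> w\<close> assms(2) by blast
  ultimately show ?thesis using that by blast
qed

lemma res_component_green:
  assumes "green E D u" "u \<in> V" "no_isolated V E"
  shows "bgb_path V E D (res_component V E D u) \<or> bg_edge V E D (res_component V E D u)"
proof -
  obtain b1 b2 where nbr: "\<And>y. E u y \<longleftrightarrow> y = b1 \<or> y = b2" using green_nbrs[OF assms] by blast
  have nt: "\<not> tdom E D u" using assms(1) by (simp add: green_def)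
  have blue: "blue E D b1" "blue E D b2"
    using nbr_of_undominated_blue[OF nt] nbr_of_green_dominated[OF assms(1)] nbr by blast+
  have res_u: "res_edge V E D u z \<longleftrightarrow> z = b1 \<or> z = b2" for z
    using res_edge_undominated_iff[OF nt assms(2)] nbr by blast
  have res_b: "res_edge V E D b1 z \<longleftrightarrow> z = u" "res_edge V E D b2 z \<longleftrightarrow> z = u" for z
    using res_edge_blue_iff_eq[OF blue(1) edge_sym nt] res_edge_blue_iff_eq[OF blue(2) edge_sym nt]
      nbr by blast+
  have C: "res_component V E D u = {b1, u, b2}"
    unfolding res_component_def using res_u res_b by (intro reachable_eq_closed_set) auto
  have "u \<noteq> b1" "u \<noteq> b2" using nbr edge_irrefl by blast+
  show ?thesis
  proof (cases "b1 = b2")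
    case True
    with C res_u res_b \<open>u \<noteq> b1\<close> have "bg_edge V E D (res_component V E D u)"
      unfolding bg_edge_def res_edges_on_def using assms(1) blue
      by (intro exI[of _ b1] exI[of _ u]) (auto simp: doubleton_eq_iff)
    thus ?thesis ..
  next
    case False
    with C res_u res_b \<open>u \<noteq> b1\<close> \<open>u \<noteq> b2\<close> have "bgb_path V E D (res_component V E D u)"
      unfolding bgb_path_def res_edges_on_def using assms(1) blue
      by (intro exI[of _ b1] exI[of _ u] exI[of _ b2]) (auto simp: doubleton_eq_iff)
    thus ?thesis ..
  qed
qed

lemma res_component_white_pair:
  assumes "white E D u" "E u w" "\<not> tdom E D w"
    and deg: "\<forall>u v. E u v \<longrightarrow> 4 \<le> degree E u + degree E v"
  shows "bwwb_path V E D (res_component V E D u)"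
proof -
  have nt: "\<not> tdom E D u" using assms(1) by (simp add: white_def)
  have "white E D w" using white_if_undominated_nbr[OF assms(3) edge_sym[OF assms(2)] nt] .
  obtain b where b: "b \<noteq> w" "tdom E D b" and nbr_u: "\<And>y. E u y \<longleftrightarrow> y = w \<or> y = b"
    using white_pair_nbrs[OF assms] by blast
  obtain b' where b': "b' \<noteq> u" "tdom E D b'" and nbr_w: "\<And>y. E w y \<longleftrightarrow> y = u \<or> y = b'"
    using white_pair_nbrs[OF \<open>white E D w\<close> edge_sym[OF assms(2)] nt deg] by blast
  have blue: "blue E D b" "blue E D b'"
    using nbr_of_undominated_blue[OF nt _ b(2)] nbr_of_undominated_blue[OF assms(3) _ b'(2)]
      nbr_u nbr_w by blast+
  have res_u: "res_edge V E D u z \<longleftrightarrow> z = w \<or> z = b" for z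
    using res_edge_undominated_iff[OF nt edge_in_V[OF assms(2), THEN conjunct1]] nbr_u by blast
  have res_w: "res_edge V E D w z \<longleftrightarrow> z = u \<or> z = b'" for z
    using res_edge_undominated_iff[OF assms(3) edge_in_V[OF assms(2), THEN conjunct2]] nbr_w by blast
  have res_b: "res_edge V E D b z \<longleftrightarrow> z = u" "res_edge V E D b' z \<longleftrightarrow> z = w" for z
    using res_edge_blue_iff_eq[OF blue(1) edge_sym nt]
      res_edge_blue_iff_eq[OF blue(2) edge_sym assms(3)]
      nbr_u nbr_w by blast+
  have "E u b" "E w b'" using nbr_u nbr_w by blast+
  have "b \<noteq> b'" using res_b[of u] assms(2) edge_irrefl by auto
  hence "distinct [b, u, w, b']"
    using b(1) b'(1) \<open>E u b\<close> \<open>E w b'\<close> assms(2) edge_irrefl by auto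
  moreover have "res_component V E D u = {b, u, w, b'}"
    unfolding res_component_def
  proof (rule reachable_eq_closed_set)
    show "(res_edge V E D)\<^sup>*\<^sup>* u y" if "y \<in> {b, u, w, b'}" for y
      using that res_u res_w
        rtranclp.rtrancl_into_rtrancl[OF r_into_rtranclp[of "res_edge V E D" u w], of b'] by auto
  qed (use res_u res_w res_b in auto)
  ultimately show ?thesis
    unfolding bwwb_path_def res_edges_on_def using assms(1) \<open>white E D w\<close> blue res_u res_w res_b
    by (intro exI[of _ b] exI[of _ u] exI[of _ w] exI[of _ b']) (auto simp: doubleton_eq_iff)
qed

lemma res_component_lonely_white:
  assumes "white E D u" "\<forall>y. E u y \<longrightarrow> tdom E D y" "u \<in> V" "no_isolated V E"
  shows "bw_edge V E D (res_component V E D u)"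
proof -
  have nt: "\<not> tdom E D u" using assms(1) by (simp add: white_def)
  obtain b where "E u b" using assms(3,4) by (auto simp: no_isolated_def)
  hence nbr: "E u y \<longleftrightarrow> y = b" for y using white_dominated_nbrs_unique[OF assms(1,2)] by blast
  have blue: "blue E D b" using nbr_of_undominated_blue[OF nt \<open>E u b\<close>] assms(2) \<open>E u b\<close> by blast
  have res_u: "res_edge V E D u z \<longleftrightarrow> z = b" for z
    using res_edge_undominated_iff[OF nt assms(3)] nbr by blast
  have res_b: "res_edge V E D b z \<longleftrightarrow> z = u" for z
    using res_edge_blue_iff_eq[OF blue edge_sym[OF \<open>E u b\<close>] nt] .
  have "res_component V E D u = {b, u}"
    unfolding res_component_def using res_u res_b by (intro reachable_eq_closed_set) auto
  with res_u res_b \<open>E u b\<close> edge_irrefl show ?thesis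
    unfolding bw_edge_def res_edges_on_def using assms(1) blue
    by (intro exI[of _ b] exI[of _ u]) (auto simp: doubleton_eq_iff)
qed

end

theorem claim2p2:
  fixes V :: "'a set" and E :: "'a \<Rightarrow> 'a \<Rightarrow> bool" and D :: "'a set"
  assumes "simple_graph V E"
    and "no_isolated V E"
    and "\<forall>u v. E u v \<longrightarrow> degree E u + degree E v \<ge> 4"
    and "game_stage V E D"
    and "\<forall>v. legal_move V E D v \<longrightarrow> move_value V E D v \<le> 4"
    and "res_vert V E D x"
  shows "let C = res_component V E D x in
     (\<exists>a b c d. distinct [a, b, c, d] \<and> C = {a, b, c, d}
        \<and> res_edges_on V E D C {{a, b}, {b, c}, {c, d}}
        \<and> blue E D a \<and> white E D b \<and> white E D c \<and> blue E D d)
   \<or> (\<exists>a b c. distinct [a, b, c] \<and> C = {a, b, c}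
        \<and> res_edges_on V E D C {{a, b}, {b, c}}
        \<and> blue E D a \<and> green E D b \<and> blue E D c)
   \<or> (\<exists>a b. a \<noteq> b \<and> C = {a, b} \<and> res_edges_on V E D C {{a, b}}
        \<and> blue E D a \<and> green E D b)
   \<or> (\<exists>a b. a \<noteq> b \<and> C = {a, b} \<and> res_edges_on V E D C {{a, b}}
        \<and> blue E D a \<and> white E D b)"
\<comment> \<open>The stage need not be reachable: the bound on move values alone forces the shapes.\<close>
proof -
  interpret value_bounded V E D
    using assms(1,5) by unfold_locales
  obtain u where "u \<in> V" "\<not> tdom E D u" and C: "res_component V E D x = res_component V E D u"
    using res_component_has_undominated[OF assms(6)] by blast
  then consider "green E D u"
    | w where "white E D u" "E u w" "\<not> tdom E D w"
    | "white E D u" "\<forall>y. E u y \<longrightarrow> tdom E D y"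
    by (auto simp: green_def white_def)
  hence "bwwb_path V E D (res_component V E D u) \<or> bgb_path V E D (res_component V E D u)
    \<or> bg_edge V E D (res_component V E D u) \<or> bw_edge V E D (res_component V E D u)"
  proof cases
    case 1 thus ?thesis using res_component_green[OF _ \<open>u \<in> V\<close> assms(2)] by blast
  next
    case 2 thus ?thesis using res_component_white_pair[OF _ _ _ assms(3)] by blast
  next
    case 3 thus ?thesis using res_component_lonely_white[OF _ _ \<open>u \<in> V\<close> assms(2)] by blast
  qed
  thus ?thesis unfolding C Let_def bwwb_path_def bgb_path_def bg_edge_def bw_edge_def .
qed

end
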